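(* Let $\rho\in(0,\infty)$ and $\bar v\in(0,1)$. There exist constants $c_1,c_2>0$ (depending only on $\bar v$, $\rho$ and $q$) such that for all $y\in\mathbb Z^2$ and $l\in\mathbb Z_+$, $\mathbb P^\rho[h(y)>l]\le c_1e^{-c_2l}$, where $h(y)=\inf\{l\in\mathbb Z_+:\ \omega(W^\times_y\cap W^\times_{y+(l,l)})=0\}$.
   Context: Fix $q\in(0,1)$. $W$ is the set of two-sided paths $w:\mathbb Z\to\mathbb Z$ with $|w(n+1)-w(n)|\le1$; $P_x$ is the law on $W$ of a two-sided lazy simple random walk (steps $-1,0,1$ with probabilities $\frac{1-q}2,q,\frac{1-q}2$) with $w(0)=x$. Under $\mathbb P^\rho$, $\omega$ is a Poisson point process on $W$ with intensity $\rho\sum_xP_x$. Cones: $\angle(x,n)=(x,n)+\{(x',n')\in\mathbb Z_+^2: x'\ge\bar vn'\}$ and $\angle^{\mathrm{rev}}(x,n)=(x,n)+\{(x',n')\in\mathbb Z_-^2: x'<\bar vn'\}$ ($\mathbb Z_\pm$ include $0$). The trace of $w$ is $\{(w(n),n):n\in\mathbb Z\}$; $W^\times_y$ is the set of $w\in W$ whose trace intersects both $\angle(y)$ and $\angle^{\mathrm{rev}}(y)$. *)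

theory Defs
  imports "HOL-Probability.Probability"
begin

type_synonym path = "int \<Rightarrow> int"

definition Wpaths :: "path set" where
  "Wpaths = {w. \<forall>n. \<bar>w (n + 1) - w n\<bar> \<le> 1}"

definition path_space :: "path measure" where
  "path_space = PiM UNIV (\<lambda>_::int. count_space (UNIV::int set))"

text \<open>Step law: -1, 0, 1 with probabilities (1-q)/2, q, (1-q)/2.\<close>
definition step_pmf :: "real \<Rightarrow> int pmf" where
  "step_pmf q = bernoulli_pmf q \<bind> (\<lambda>b. if b then return_pmf 0
      else map_pmf (\<lambda>b'. if b' then 1 else -1) (bernoulli_pmf (1/2)))"

text \<open>Two-sided path with w(0)=x built from i.i.d. increments xi, w(n+1)-w(n) = xi n.\<close>
definition path_of :: "int \<Rightarrow> (int \<Rightarrow> int) \<Rightarrow> path" where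
  "path_of x xi n = x + (if 0 \<le> n then sum xi {0..<n} else - sum xi {n..<0})"

definition Px :: "real \<Rightarrow> int \<Rightarrow> path measure" where
  "Px q x = distr (PiM UNIV (\<lambda>_::int. measure_pmf (step_pmf q))) path_space (path_of x)"

definition intensity :: "real \<Rightarrow> real \<Rightarrow> path set \<Rightarrow> ennreal" where
  "intensity q \<rho> A = ennreal \<rho> * (\<integral>\<^sup>+ x. emeasure (Px q x) A \<partial>count_space (UNIV::int set))"

definition is_PPP :: "'a measure \<Rightarrow> (path set \<Rightarrow> ennreal) \<Rightarrow> ('a \<Rightarrow> path measure) \<Rightarrow> bool" where
  "is_PPP M \<mu> \<omega> \<longleftrightarrow> prob_space M
     \<and> (\<forall>s\<in>space M. sets (\<omega> s) = sets path_space)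
     \<and> (\<forall>A\<in>sets path_space. (\<lambda>s. emeasure (\<omega> s) A) \<in> borel_measurable M)
     \<and> (\<forall>A\<in>sets path_space. \<mu> A < \<infinity> \<longrightarrow> (\<forall>k::nat.
          measure M {s\<in>space M. emeasure (\<omega> s) A = of_nat k}
            = enn2real (\<mu> A) ^ k / fact k * exp (- enn2real (\<mu> A))))
     \<and> (\<forall>(I::nat set) A. finite I \<longrightarrow> disjoint_family_on A I
          \<longrightarrow> (\<forall>i\<in>I. A i \<in> sets path_space \<and> \<mu> (A i) < \<infinity>)
          \<longrightarrow> prob_space.indep_vars M (\<lambda>_. borel) (\<lambda>i s. emeasure (\<omega> s) (A i)) I)"

text \<open>Cones (points are (space, time)).\<close>
definition cone :: "real \<Rightarrow> int \<times> int \<Rightarrow> (int \<times> int) set" where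
  "cone v y = {(fst y + a, snd y + b) | a b. 0 \<le> a \<and> 0 \<le> b \<and> real_of_int a \<ge> v * real_of_int b}"

definition cone_rev :: "real \<Rightarrow> int \<times> int \<Rightarrow> (int \<times> int) set" where
  "cone_rev v y = {(fst y + a, snd y + b) | a b. a \<le> 0 \<and> b \<le> 0 \<and> real_of_int a < v * real_of_int b}"

definition trace :: "path \<Rightarrow> (int \<times> int) set" where
  "trace w = {(w n, n) | n. True}"

definition Wcross :: "real \<Rightarrow> int \<times> int \<Rightarrow> path set" where
  "Wcross v y = {w \<in> Wpaths. trace w \<inter> cone v y \<noteq> {} \<and> trace w \<inter> cone_rev v y \<noteq> {}}"

definition hfun :: "real \<Rightarrow> path measure \<Rightarrow> int \<times> int \<Rightarrow> enat" where
  "hfun v om y = Inf (enat ` {l::nat. emeasure om (Wcross v y \<inter> Wcross v (fst y + int l, snd y + int l)) = 0})"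

end

theory Submission
  imports Defs
begin

(* Write S_l = W^x_y \<inter> W^x_(y+(l,l)).  If h(y) > l then \<omega>(S_l) \<noteq> 0, and for a
   Poisson process P[\<omega>(S_l) \<noteq> 0] = 1 - exp(-\<mu>(S_l)) \<le> \<mu>(S_l), so it suffices to show that the
   intensity \<mu>(S_l) = \<rho> \<Sum>_x P_x(S_l) decays exponentially in l.
   Build the walk from w(0) = x and i.i.d. increments \<xi>.  A path in S_l visits the reversed cone
   at y at some time y2 - i and the cone at y + (l,l) at some time y2 + l + j; this confines the
   starting point x to an interval of length  \<Sum>_{k \<in> [y2-i, y2+l+j)} \<xi> k - v(i+j) - l.
   Counting lattice points in such an interval by an exponential (Chernoff) bound and summing over
   i, j, the expected number of good starting points is at most
      \<Sum>_{i,j} e^{t(1 - v(i+j) - l)}/t \<cdot> \<phi>^{l+i+j},   \<phi> = E e^{t \<xi>},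
   and with t = v/2 one has \<phi> < e^{tv}, so this double geometric series is \<le> C e^{-t(1-v) l}.
   The file first proves measurability and product-measure facts, then the deterministic geometry
   of crossing paths, then the intensity bound, then the Poisson step, and finally the theorem. *)

section \<open>Measurability of the crossing events\<close>

lemma coordinate_measurable_path_space:
  "(\<lambda>w::path. w n) \<in> measurable path_space (count_space UNIV)"
  unfolding path_space_def by simp

lemma point_event_sets: "{w::path. (w n, n) \<in> C} \<in> sets path_space"
proof -
  have "Measurable.pred path_space (\<lambda>w. (w n, n) \<in> C)"
    by (rule measurable_compose[OF coordinate_measurable_path_space]) simp
  then show ?thesis by (simp add: pred_def path_space_def space_PiM)
qed

lemma step_event_sets: "{w::path. \<bar>w (n + 1) - w n\<bar> \<le> 1} \<in> sets path_space"
proof -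
  have [measurable]: "(\<lambda>w::path. real_of_int (w k)) \<in> borel_measurable path_space" for k
    by (rule measurable_compose[OF coordinate_measurable_path_space]) simp
  have "{w::path. \<bar>w (n + 1) - w n\<bar> \<le> 1}
      = {w \<in> space path_space. \<bar>real_of_int (w (n + 1)) - real_of_int (w n)\<bar> \<le> 1}"
    by (auto simp: path_space_def space_PiM)
  also have "\<dots> \<in> sets path_space" by measurable
  finally show ?thesis .
qed

text \<open>W^x_y is a countable Boolean combination of events depending on one or two coordinates.\<close>
lemma Wcross_sets: "Wcross v y \<in> sets path_space"
proof -
  have "Wcross v y = (\<Inter>n. {w. \<bar>w (n + 1) - w n\<bar> \<le> 1})
      \<inter> (\<Union>n. {w. (w n, n) \<in> cone v y}) \<inter> (\<Union>n. {w. (w n, n) \<in> cone_rev v y})"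
    by (auto simp: Wcross_def Wpaths_def trace_def)
  also have "\<dots> \<in> sets path_space"
    by (intro sets.Int sets.countable_INT' sets.countable_UN')
       (auto intro: point_event_sets step_event_sets)
  finally show ?thesis .
qed

definition iid :: "'b pmf \<Rightarrow> (int \<Rightarrow> 'b) measure" where
  "iid p = PiM UNIV (\<lambda>_::int. measure_pmf p)"

lemma product_prob_space_iid: "product_prob_space (\<lambda>_::int. measure_pmf p)"
  unfolding product_prob_space_def product_prob_space_axioms_def product_sigma_finite_def
  by (auto intro: prob_space_measure_pmf prob_space_imp_sigma_finite)

lemma Px_eq_distr_iid: "Px q x = distr (iid (step_pmf q)) path_space (path_of x)"
  by (simp add: Px_def iid_def)

lemma nn_integral_iid_prod:
  assumes "finite J"
  shows "(\<integral>\<^sup>+\<xi>. (\<Prod>k\<in>J. f (\<xi> k)) \<partial>iid p) = (\<integral>\<^sup>+z. f z \<partial>measure_pmf p) ^ card J"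
proof -
  interpret product_prob_space "\<lambda>_::int. measure_pmf p" UNIV by (rule product_prob_space_iid)
  let ?M = "\<lambda>_::int. measure_pmf p"
  have [measurable]: "f \<in> borel_measurable (count_space UNIV)" by simp
  have f_meas: "(\<lambda>x. \<Prod>k\<in>J. f (x k)) \<in> borel_measurable (PiM J ?M)" by measurable
  have "(\<integral>\<^sup>+\<xi>. (\<Prod>k\<in>J. f (\<xi> k)) \<partial>iid p)
      = (\<integral>\<^sup>+\<xi>. (\<lambda>x. \<Prod>k\<in>J. f (x k)) (restrict \<xi> J) \<partial>PiM UNIV ?M)"
    unfolding iid_def by (intro nn_integral_cong prod.cong) auto
  also have "\<dots> = (\<integral>\<^sup>+x. (\<Prod>k\<in>J. f (x k)) \<partial>distr (PiM UNIV ?M) (PiM J ?M) (\<lambda>x. restrict x J))"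
    using f_meas by (intro nn_integral_distr[symmetric] measurable_restrict_subset) auto
  also have "\<dots> = (\<integral>\<^sup>+x. (\<Prod>k\<in>J. f (x k)) \<partial>PiM J ?M)"
    using assms by (simp add: distr_PiM_restrict_finite)
  also have "\<dots> = (\<Prod>k\<in>J. \<integral>\<^sup>+z. f z \<partial>measure_pmf p)"
    using assms by (subst product_nn_integral_prod) auto
  finally show ?thesis by simp
qed

lemma iid_coordinate_measurable[measurable]:
  "(\<lambda>\<xi>. real_of_int (\<xi> i)) \<in> borel_measurable (iid p)"
  unfolding iid_def by measurable

lemma path_of_measurable: "path_of x \<in> measurable (iid p) path_space"
proof -
  have "(\<lambda>\<xi> n. path_of x \<xi> n) \<in> measurable (iid p) (PiM UNIV (\<lambda>_. count_space UNIV))"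
  proof (rule measurable_PiM_single')
    fix n :: int
    define s where "s \<xi> = real_of_int x + (if 0 \<le> n then \<Sum>i\<in>{0..<n}. real_of_int (\<xi> i)
                                        else - (\<Sum>i\<in>{n..<0}. real_of_int (\<xi> i)))" for \<xi> :: "int \<Rightarrow> int"
    have "(\<lambda>\<xi>. path_of x \<xi> n) = (\<lambda>\<xi>. \<lfloor>s \<xi>\<rfloor>)"
      by (rule ext) (auto simp: s_def path_of_def simp flip: of_int_sum of_int_minus)
    moreover have "s \<in> borel_measurable (iid p)"
      unfolding s_def by measurable
    ultimately show "(\<lambda>\<xi>. path_of x \<xi> n) \<in> measurable (iid p) (count_space UNIV)"
      by (simp add: measurable_compose[OF _ measurable_real_floor])
  qed auto
  then show ?thesis unfolding path_space_def by simp
qed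

section \<open>The moment generating function of a lazy step\<close>

definition step_mgf :: "real \<Rightarrow> real \<Rightarrow> real" where
  "step_mgf q t = q + (1 - q) * ((exp t + exp (- t)) / 2)"

lemma step_mgf_nonneg: "0 \<le> q \<Longrightarrow> q \<le> 1 \<Longrightarrow> 0 \<le> step_mgf q t"
  by (simp add: step_mgf_def)

lemma nn_integral_step_pmf_exp:
  assumes "0 \<le> q" "q \<le> 1"
  shows "(\<integral>\<^sup>+z. ennreal (exp (t * real_of_int z)) \<partial>measure_pmf (step_pmf q)) = ennreal (step_mgf q t)"
proof -
  have half: "ennreal a * inverse 2 = ennreal (a / 2)" if "a \<ge> 0" for a :: real
    using that by (simp add: divide_ennreal[symmetric] divide_ennreal_def)
  have "(\<integral>\<^sup>+z. ennreal (exp (t * real_of_int z)) \<partial>measure_pmf (step_pmf q))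
     = ennreal q + (ennreal (exp t / 2) + ennreal (exp (-t) / 2)) * ennreal (1 - q)"
    using assms unfolding step_pmf_def by (simp add: half)
  also have "\<dots> = ennreal (q + (exp t / 2 + exp (-t) / 2) * (1 - q))"
    using assms by (simp add: ennreal_plus[symmetric] ennreal_mult[symmetric] del: ennreal_plus)
  finally show ?thesis by (simp add: step_mgf_def field_simps)
qed

text \<open>A lazy symmetric step has variance at most 1, reflected in  E e^{t\<xi>} \<le> 1 + t^2  for t \<le> 1.\<close>
lemma step_mgf_le:
  assumes "0 \<le> q" "q \<le> 1" "0 < t" "t \<le> 1"
  shows "step_mgf q t \<le> 1 + t^2"
proof -
  have up: "exp t \<le> 1 + t + t^2" using exp_bound[of t] assms by simp
  have "exp (-t) \<le> 1 / (1 + t)"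
    using exp_ge_add_one_self[of t] assms by (simp add: exp_minus field_simps)
  also have "\<dots> \<le> 1 - t + t^2"
  proof -
    have "(1 - t + t^2) * (1 + t) = 1 + t^3"
      by (simp add: algebra_simps power2_eq_square power3_eq_cube)
    moreover have "0 \<le> t^3" using assms by simp
    ultimately have "1 \<le> (1 - t + t^2) * (1 + t)" by linarith
    then show ?thesis using assms by (simp add: divide_le_eq)
  qed
  finally have down: "exp (-t) \<le> 1 - t + t^2" .
  have "step_mgf q t \<le> q + (1 - q) * (1 + t^2)"
    unfolding step_mgf_def using up down assms by (intro add_left_mono mult_left_mono) auto
  also have "\<dots> \<le> 1 + t^2"
  proof -
    have "(1 - q) * t^2 \<le> t^2" using assms by (intro mult_left_le_one_le) auto
    then show ?thesis by (simp add: algebra_simps)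
  qed
  finally show ?thesis .
qed

text \<open>With t = v/2 the mean growth of e^{t \<cdot> walk} is beaten by the cone speed v.\<close>
lemma step_mgf_lt_exp_speed:
  assumes "0 \<le> q" "q \<le> 1" "0 < v" "v < 1"
  shows "0 < step_mgf q (v/2)" "step_mgf q (v/2) < exp (v/2 * v)"
proof -
  show "0 < step_mgf q (v/2)"
  proof (cases "q = 1")
    case False
    then have "0 < 1 - q" using assms by simp
    then show ?thesis
      using assms unfolding step_mgf_def by (intro add_nonneg_pos mult_pos_pos divide_pos_pos add_pos_pos) auto
  qed (simp add: step_mgf_def)
  have "step_mgf q (v/2) \<le> 1 + (v/2)^2" using assms by (intro step_mgf_le) auto
  also have "\<dots> < 1 + v/2 * v" using assms by (simp add: power2_eq_square)
  also have "\<dots> \<le> exp (v/2 * v)" by (rule exp_ge_add_one_self)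
  finally show "step_mgf q (v/2) < exp (v/2 * v)" .
qed

lemma card_int_interval_exp_bound:
  assumes "0 < t"
  shows "(\<integral>\<^sup>+x. indicator {x::int. L \<le> real_of_int x \<and> real_of_int x < U} x \<partial>count_space UNIV)
         \<le> ennreal (exp (t * (U - L + 1)) / t)"
proof -
  let ?A = "{x::int. L \<le> real_of_int x \<and> real_of_int x < U}"
  have sub: "?A \<subseteq> {\<lceil>L\<rceil>..<\<lceil>U\<rceil>}" by (auto simp: ceiling_le_iff less_ceiling_iff)
  then have fin: "finite ?A" by (rule finite_subset) simp
  have "real (card ?A) \<le> real (card {\<lceil>L\<rceil>..<\<lceil>U\<rceil>})" using card_mono[OF _ sub] by simp
  also have "\<dots> = max 0 (real_of_int \<lceil>U\<rceil> - real_of_int \<lceil>L\<rceil>)" by simp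
  also have "\<dots> \<le> max 0 (U - L + 1)" by (intro max.mono) linarith+
  also have "\<dots> \<le> exp (t * (U - L + 1)) / t"
  proof (cases "U - L + 1 \<le> 0")
    case False
    have "t * (U - L + 1) \<le> exp (t * (U - L + 1))"
      using exp_ge_add_one_self[of "t * (U - L + 1)"] by linarith
    then show ?thesis using assms False by (simp add: field_simps)
  qed (use assms in simp)
  finally have "real (card ?A) \<le> exp (t * (U - L + 1)) / t" .
  moreover have "(\<integral>\<^sup>+x. indicator ?A x \<partial>count_space UNIV) = ennreal (real (card ?A))"
    using fin by (simp add: ennreal_of_nat_eq_real_of_nat)
  ultimately show ?thesis by (simp add: ennreal_leI)
qed

lemma nn_integral_geometric2:
  fixes r K :: real
  assumes "0 \<le> r" "r < 1" "0 \<le> K"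
  shows "(\<integral>\<^sup>+p. ennreal (K * r ^ fst p * r ^ snd p) \<partial>count_space (UNIV::(nat \<times> nat) set))
         = ennreal (K / (1 - r)^2)"
proof -
  have geo: "(\<Sum>j. ennreal (C * r ^ j)) = ennreal (C / (1 - r))" if "0 \<le> C" for C
  proof -
    have s: "summable (\<lambda>j. r ^ j)" using assms by (intro summable_geometric) simp
    have "(\<Sum>j. ennreal (C * r ^ j)) = ennreal (\<Sum>j. C * r ^ j)"
      using assms that s by (intro suminf_ennreal2 summable_mult) auto
    also have "(\<Sum>j. C * r ^ j) = C / (1 - r)"
      using assms suminf_mult[OF s, of C] suminf_geometric[of r] by simp
    finally show ?thesis .
  qed
  have "(\<integral>\<^sup>+p. ennreal (K * r ^ fst p * r ^ snd p) \<partial>count_space (UNIV::(nat \<times> nat) set))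
      = (\<Sum>i. \<Sum>j. ennreal ((K * r ^ i) * r ^ j))"
    using nn_integral_fst_count_space[of "\<lambda>p. ennreal (K * r ^ fst p * r ^ snd p)"]
    by (simp add: nn_integral_count_space_nat)
  also have "\<dots> = (\<Sum>i. ennreal ((K / (1 - r)) * r ^ i))"
  proof (rule suminf_cong)
    fix i
    have "0 \<le> K * r ^ i" using assms by simp
    have "K / (1 - r) * r ^ i = K * r ^ i / (1 - r)" by simp
    with geo[OF \<open>0 \<le> K * r ^ i\<close>]
    show "(\<Sum>j. ennreal (K * r ^ i * r ^ j)) = ennreal (K / (1 - r) * r ^ i)"
      by (simp only:)
  qed
  also have "\<dots> = ennreal (K / (1 - r) / (1 - r))"
    using assms by (intro geo) auto
  finally show ?thesis by (simp add: power2_eq_square)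
qed

section \<open>Geometry of paths crossing two cones\<close>

lemma path_of_diff:
  assumes "n1 \<le> n2"
  shows "path_of x \<xi> n2 - path_of x \<xi> n1 = sum \<xi> {n1..<n2}"
proof -
  have split: "sum \<xi> {a..<c} = sum \<xi> {a..<b} + sum \<xi> {b..<c}" if "a \<le> b" "b \<le> c" for a b c :: int
  proof -
    have "{a..<c} = {a..<b} \<union> {b..<c}" using that by auto
    then show ?thesis by (simp add: sum.union_disjoint)
  qed
  consider "0 \<le> n1" | "n1 < 0" "0 \<le> n2" | "n2 < 0" using assms by linarith
  then show ?thesis
  proof cases
    case 1
    then show ?thesis using assms split[of 0 n1 n2] by (simp add: path_of_def)
  next
    case 2
    then show ?thesis using split[of n1 0 n2] by (simp add: path_of_def)
  next
    case 3
    then show ?thesis using assms split[of n1 n2 0] by (simp add: path_of_def)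
  qed
qed

lemma path_of_shift: "path_of x \<xi> n = x + path_of 0 \<xi> n"
  by (simp add: path_of_def)

text \<open>A path from x visiting the reversed cone at y = (y1, y2) at time y2 - i and the cone at
  y + (l, l) at time y2 + l + j must start in an interval determined by the increments.\<close>
lemma crossing_start_interval:
  assumes "path_of x \<xi> \<in> Wcross v (y1, y2) \<inter> Wcross v (y1 + int l, y2 + int l)"
  shows "\<exists>i j::nat.
     real_of_int y1 + real l + v * real j - real_of_int (path_of 0 \<xi> (y2 + int l + int j)) \<le> real_of_int x
   \<and> real_of_int x < real_of_int y1 - v * real i - real_of_int (path_of 0 \<xi> (y2 - int i))"
proof -
  let ?w = "path_of x \<xi>"
  from assms obtain a b where rev_visit: "?w (y2 + b) = y1 + a" "b \<le> 0" "real_of_int a < v * real_of_int b"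
    by (auto simp: Wcross_def trace_def cone_rev_def)
  from assms obtain a' b' where fwd_visit: "?w (y2 + int l + b') = y1 + int l + a'" "0 \<le> b'"
      "real_of_int a' \<ge> v * real_of_int b'"
    by (auto simp: Wcross_def trace_def cone_def)
  have "real_of_int x + real_of_int (path_of 0 \<xi> (y2 + b)) = real_of_int y1 + real_of_int a"
       "real_of_int x + real_of_int (path_of 0 \<xi> (y2 + int l + b')) = real_of_int y1 + real l + real_of_int a'"
    using rev_visit(1) fwd_visit(1) path_of_shift[of x \<xi>] by (metis of_int_add of_int_of_nat_eq)+
  then show ?thesis
    using rev_visit fwd_visit by (intro exI[of _ "nat (- b)"] exI[of _ "nat b'"]) (auto simp: algebra_simps)
qed

text \<open>For fixed visit times y2 - i and y2 + l + j the admissible starting points form a window of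
  length  \<Sum>_{k \<in> [y2-i, y2+l+j)} \<xi> k - v(i+j) - l;  count them exponentially.\<close>
lemma crossing_window_count:
  fixes y1 y2 :: int and i j l :: nat
  assumes t: "0 < t"
  shows "(\<integral>\<^sup>+x. indicator {x::int.
              real_of_int y1 + real l + v * real j - real_of_int (path_of 0 \<xi> (y2 + int l + int j)) \<le> real_of_int x
            \<and> real_of_int x < real_of_int y1 - v * real i - real_of_int (path_of 0 \<xi> (y2 - int i))} x
          \<partial>count_space UNIV)
     \<le> ennreal (exp (t * (1 - v * real (i + j) - real l)) / t
                 * exp (t * (\<Sum>k\<in>{y2 - int i..<y2 + int l + int j}. real_of_int (\<xi> k))))"
proof -
  define U where "U = real_of_int y1 - v * real i - real_of_int (path_of 0 \<xi> (y2 - int i))"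
  define L where "L = real_of_int y1 + real l + v * real j - real_of_int (path_of 0 \<xi> (y2 + int l + int j))"
  have "real_of_int (path_of 0 \<xi> (y2 + int l + int j)) - real_of_int (path_of 0 \<xi> (y2 - int i))
      = (\<Sum>k\<in>{y2 - int i..<y2 + int l + int j}. real_of_int (\<xi> k))"
    using path_of_diff[of "y2 - int i" "y2 + int l + int j" 0 \<xi>] by (simp flip: of_int_diff of_int_sum)
  then have window: "exp (t * (U - L + 1)) = exp (t * (1 - v * real (i + j) - real l))
                       * exp (t * (\<Sum>k\<in>{y2 - int i..<y2 + int l + int j}. real_of_int (\<xi> k)))"
    unfolding U_def L_def exp_add[symmetric] by (intro arg_cong[where f=exp]) (simp add: algebra_simps)
  have "(\<integral>\<^sup>+x. indicator {x::int. L \<le> real_of_int x \<and> real_of_int x < U} x \<partial>count_space UNIV)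
      \<le> ennreal (exp (t * (U - L + 1)) / t)"
    by (rule card_int_interval_exp_bound[OF t])
  also have "\<dots> = ennreal (exp (t * (1 - v * real (i + j) - real l)) / t
                 * exp (t * (\<Sum>k\<in>{y2 - int i..<y2 + int l + int j}. real_of_int (\<xi> k))))"
    unfolding window by simp
  finally show ?thesis unfolding U_def L_def .
qed

lemma count_crossing_starts:
  fixes y1 y2 :: int and l :: nat
  assumes t: "0 < t"
  shows "(\<integral>\<^sup>+x. indicator (Wcross v (y1, y2) \<inter> Wcross v (y1 + int l, y2 + int l)) (path_of x \<xi>)
              \<partial>count_space UNIV)
     \<le> (\<integral>\<^sup>+p. ennreal (exp (t * (1 - v * real (fst p + snd p) - real l)) / t
                  * exp (t * (\<Sum>k\<in>{y2 - int (fst p)..<y2 + int l + int (snd p)}. real_of_int (\<xi> k))))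
              \<partial>count_space UNIV)"
proof -
  let ?S = "Wcross v (y1, y2) \<inter> Wcross v (y1 + int l, y2 + int l)"
  define A where "A p = {x::int.
      real_of_int y1 + real l + v * real (snd p) - real_of_int (path_of 0 \<xi> (y2 + int l + int (snd p))) \<le> real_of_int x
    \<and> real_of_int x < real_of_int y1 - v * real (fst p) - real_of_int (path_of 0 \<xi> (y2 - int (fst p)))}"
    for p :: "nat \<times> nat"
  have "(\<integral>\<^sup>+x. indicator ?S (path_of x \<xi>) \<partial>count_space UNIV)
      \<le> (\<integral>\<^sup>+x. \<integral>\<^sup>+p. indicator (A p) x \<partial>count_space UNIV \<partial>count_space UNIV)"
  proof (intro nn_integral_mono)
    fix x :: int
    show "indicator ?S (path_of x \<xi>) \<le> (\<integral>\<^sup>+p. indicator (A p) x \<partial>count_space UNIV)"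
    proof (cases "path_of x \<xi> \<in> ?S")
      case True
      from crossing_start_interval[OF True] obtain i j where "x \<in> A (i, j)"
        unfolding A_def by auto
      then have "indicator ?S (path_of x \<xi>) = (indicator (A (i, j)) x :: ennreal)"
        using True by simp
      also have "\<dots> = (\<integral>\<^sup>+p. indicator (A p) x * indicator {(i, j)} p \<partial>count_space UNIV)"
        by simp
      also have "\<dots> \<le> (\<integral>\<^sup>+p. indicator (A p) x \<partial>count_space UNIV)"
        by (intro nn_integral_mono) (simp add: indicator_def)
      finally show ?thesis .
    qed simp
  qed
  also have "\<dots> = (\<integral>\<^sup>+p. \<integral>\<^sup>+x. indicator (A p) x \<partial>count_space UNIV \<partial>count_space UNIV)"
    by (rule nn_integral_count_space_nn_integral) auto
  also have "\<dots> \<le> (\<integral>\<^sup>+p. ennreal (exp (t * (1 - v * real (fst p + snd p) - real l)) / t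
                  * exp (t * (\<Sum>k\<in>{y2 - int (fst p)..<y2 + int l + int (snd p)}. real_of_int (\<xi> k))))
              \<partial>count_space UNIV)"
    unfolding A_def by (intro nn_integral_mono crossing_window_count t)
  finally show ?thesis .
qed

section \<open>Bounding the intensity of S_l\<close>

lemma intensity_eq_expected_count:
  assumes S: "S \<in> sets path_space"
  shows "intensity q \<rho> S
       = ennreal \<rho> * (\<integral>\<^sup>+\<xi>. (\<integral>\<^sup>+x. indicator S (path_of x \<xi>) \<partial>count_space UNIV) \<partial>iid (step_pmf q))"
proof -
  have "emeasure (Px q x) S = (\<integral>\<^sup>+\<xi>. indicator S (path_of x \<xi>) \<partial>iid (step_pmf q))" for x
  proof -
    have "emeasure (Px q x) S = (\<integral>\<^sup>+w. indicator S w \<partial>Px q x)"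
      using S by (simp add: Px_eq_distr_iid)
    also have "\<dots> = (\<integral>\<^sup>+\<xi>. indicator S (path_of x \<xi>) \<partial>iid (step_pmf q))"
      unfolding Px_eq_distr_iid using S by (intro nn_integral_distr path_of_measurable) auto
    finally show ?thesis .
  qed
  moreover have "(\<lambda>\<xi>. indicator S (path_of x \<xi>) :: ennreal) \<in> borel_measurable (iid (step_pmf q))" for x
    using S by (intro measurable_compose[OF path_of_measurable] borel_measurable_indicator)
  ultimately show ?thesis
    unfolding intensity_def by (simp add: nn_integral_count_space_nn_integral)
qed

lemma expectation_exp_increment_sum:
  assumes "0 \<le> q" "q \<le> 1" "finite J" "0 \<le> c"
  shows "(\<integral>\<^sup>+\<xi>. ennreal (c * exp (t * (\<Sum>k\<in>J. real_of_int (\<xi> k)))) \<partial>iid (step_pmf q))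
       = ennreal (c * step_mgf q t ^ card J)"
proof -
  have "ennreal (c * exp (t * (\<Sum>k\<in>J. real_of_int (\<xi> k))))
      = ennreal c * (\<Prod>k\<in>J. ennreal (exp (t * real_of_int (\<xi> k))))" for \<xi> :: "int \<Rightarrow> int"
    using assms by (simp add: sum_distrib_left exp_sum prod_ennreal ennreal_mult prod_nonneg)
  then have "(\<integral>\<^sup>+\<xi>. ennreal (c * exp (t * (\<Sum>k\<in>J. real_of_int (\<xi> k)))) \<partial>iid (step_pmf q))
      = ennreal c * (\<integral>\<^sup>+\<xi>. (\<Prod>k\<in>J. ennreal (exp (t * real_of_int (\<xi> k)))) \<partial>iid (step_pmf q))"
    by (simp add: nn_integral_cmult)
  also have "(\<integral>\<^sup>+\<xi>. (\<Prod>k\<in>J. ennreal (exp (t * real_of_int (\<xi> k)))) \<partial>iid (step_pmf q))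
      = (\<integral>\<^sup>+z. ennreal (exp (t * real_of_int z)) \<partial>measure_pmf (step_pmf q)) ^ card J"
    by (rule nn_integral_iid_prod[OF assms(3)])
  also have "\<dots> = ennreal (step_mgf q t ^ card J)"
    using assms step_mgf_nonneg[of q t] by (simp add: nn_integral_step_pmf_exp ennreal_power)
  finally show ?thesis using assms step_mgf_nonneg[of q t] by (simp add: ennreal_mult)
qed

lemma crossing_term_bound:
  fixes t v \<phi> r :: real and l i j :: nat
  assumes "0 < t" "0 \<le> r" "r \<le> 1" "\<phi> = r * exp (t * v)"
  shows "exp (t * (1 - v * real (i + j) - real l)) / t * \<phi> ^ (l + i + j)
     \<le> exp t / t * exp (- (t * (1 - v)) * real l) * r ^ i * r ^ j"
proof -
  have "exp (t * (1 - v * real (i + j) - real l)) * exp (t * v) ^ (l + i + j)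
      = exp t * exp (- (t * (1 - v)) * real l)"
    unfolding exp_of_nat_mult[symmetric] exp_add[symmetric] by (simp add: algebra_simps)
  then have "exp (t * (1 - v * real (i + j) - real l)) / t * \<phi> ^ (l + i + j)
      = exp t / t * exp (- (t * (1 - v)) * real l) * r ^ i * r ^ j * r ^ l"
    unfolding assms(4) power_mult_distrib power_add by (simp add: field_simps)
  also have "\<dots> \<le> exp t / t * exp (- (t * (1 - v)) * real l) * r ^ i * r ^ j * 1"
    using assms by (intro mult_left_mono power_le_one) auto
  finally show ?thesis by simp
qed

lemma intensity_crossing_bound:
  fixes y1 y2 :: int and l :: nat
  assumes q: "0 \<le> q" "q \<le> 1" and \<rho>: "0 \<le> \<rho>" and v: "0 < v" "v < 1"
  defines "t \<equiv> v / 2"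
  defines "r \<equiv> step_mgf q t / exp (t * v)"
  shows "intensity q \<rho> (Wcross v (y1, y2) \<inter> Wcross v (y1 + int l, y2 + int l))
       \<le> ennreal (\<rho> * (exp t / t / (1 - r)^2) * exp (- (t * (1 - v)) * real l))"
proof -
  let ?S = "Wcross v (y1, y2) \<inter> Wcross v (y1 + int l, y2 + int l)"
  let ?J = "\<lambda>p::nat \<times> nat. {y2 - int (fst p)..<y2 + int l + int (snd p)}"
  let ?c = "\<lambda>p::nat \<times> nat. exp (t * (1 - v * real (fst p + snd p) - real l)) / t"
  define F where "F p \<xi> = ennreal (?c p * exp (t * (\<Sum>k\<in>?J p. real_of_int (\<xi> k))))"
    for p and \<xi> :: "int \<Rightarrow> int"
  define K where "K = exp t / t * exp (- (t * (1 - v)) * real l)"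
  have t: "0 < t" using v unfolding t_def by simp
  have r: "0 \<le> r" "r < 1" "step_mgf q t = r * exp (t * v)"
    using step_mgf_lt_exp_speed[OF q v] unfolding r_def t_def by (auto simp: divide_less_eq)
  have K: "0 \<le> K" unfolding K_def using t by simp
  have F_meas: "F p \<in> borel_measurable (iid (step_pmf q))" for p
    unfolding F_def by measurable
  have expected_term: "(\<integral>\<^sup>+\<xi>. F p \<xi> \<partial>iid (step_pmf q)) \<le> ennreal (K * r ^ fst p * r ^ snd p)" for p
  proof -
    have "card (?J p) = l + fst p + snd p" by simp
    then have "(\<integral>\<^sup>+\<xi>. F p \<xi> \<partial>iid (step_pmf q)) = ennreal (?c p * step_mgf q t ^ (l + fst p + snd p))"
      unfolding F_def using expectation_exp_increment_sum[OF q, of "?J p" "?c p" t] t by simp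
    also have "\<dots> \<le> ennreal (K * r ^ fst p * r ^ snd p)"
      using crossing_term_bound[OF t r(1) _ r(3)] r(2) unfolding K_def by (intro ennreal_leI) auto
    finally show ?thesis .
  qed
  have "intensity q \<rho> ?S \<le> ennreal \<rho> * (\<integral>\<^sup>+\<xi>. (\<integral>\<^sup>+p. F p \<xi> \<partial>count_space UNIV) \<partial>iid (step_pmf q))"
    unfolding intensity_eq_expected_count[OF sets.Int[OF Wcross_sets Wcross_sets]] F_def
    by (intro mult_left_mono nn_integral_mono count_crossing_starts t) auto
  also have "\<dots> = ennreal \<rho> * (\<integral>\<^sup>+p. (\<integral>\<^sup>+\<xi>. F p \<xi> \<partial>iid (step_pmf q)) \<partial>count_space UNIV)"
    using F_meas by (subst nn_integral_count_space_nn_integral) auto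
  also have "\<dots> \<le> ennreal \<rho> * (\<integral>\<^sup>+p. ennreal (K * r ^ fst p * r ^ snd p) \<partial>count_space UNIV)"
    by (intro mult_left_mono nn_integral_mono expected_term) auto
  also have "\<dots> = ennreal (\<rho> * (K / (1 - r)^2))"
    by (simp only: nn_integral_geometric2[OF r(1,2) K] ennreal_mult'[OF \<rho>])
  also have "\<dots> = ennreal (\<rho> * (exp t / t / (1 - r)^2) * exp (- (t * (1 - v)) * real l))"
    unfolding K_def by (simp add: field_simps)
  finally show ?thesis .
qed

section \<open>The Poisson step\<close>

text \<open>Void probabilities: a Poisson process charges a set of finite intensity \<mu>(A) with probability
  1 - e^{-\<mu>(A)} \<le> \<mu>(A); this bounds every event contained in "\<omega>(A) \<noteq> 0".\<close>
lemma PPP_hit_prob_le_intensity: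
  assumes ppp: "is_PPP M \<mu> \<omega>" and A: "A \<in> sets path_space" "\<mu> A < \<infinity>"
    and B: "B \<subseteq> {s \<in> space M. emeasure (\<omega> s) A \<noteq> 0}"
  shows "measure M B \<le> enn2real (\<mu> A)"
proof -
  interpret prob_space M using ppp by (simp add: is_PPP_def)
  let ?E0 = "{s \<in> space M. emeasure (\<omega> s) A = 0}"
  have "(\<lambda>s. emeasure (\<omega> s) A) \<in> borel_measurable M" using ppp A by (simp add: is_PPP_def)
  then have E0: "?E0 \<in> sets M"
    using measurable_sets[of _ M borel "{0}"] by (simp add: vimage_def Int_def conj_commute)
  have void: "prob ?E0 = exp (- enn2real (\<mu> A))"
    using ppp A unfolding is_PPP_def by (auto dest!: bspec[of _ _ A] spec[of _ 0])
  have "measure M B \<le> prob (space M - ?E0)"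
  proof (cases "B \<in> sets M")
    case True then show ?thesis using B E0 by (intro finite_measure_mono) auto
  qed (simp add: measure_notin_sets)
  also have "\<dots> = 1 - exp (- enn2real (\<mu> A))" using prob_compl[OF E0] void by simp
  also have "\<dots> \<le> enn2real (\<mu> A)"
    using exp_ge_add_one_self[of "- enn2real (\<mu> A)"] by linarith
  finally show ?thesis .
qed

lemma hfun_gt_imp_charged:
  assumes "hfun v m y > enat l"
  shows "emeasure m (Wcross v y \<inter> Wcross v (fst y + int l, snd y + int l)) \<noteq> 0"
proof
  assume "emeasure m (Wcross v y \<inter> Wcross v (fst y + int l, snd y + int l)) = 0"
  then have "hfun v m y \<le> enat l" unfolding hfun_def by (intro Inf_lower) auto
  with assms show False by simp
qed

theorem lemma4p3:
  fixes q \<rho> v :: real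
  assumes "0 < q" "q < 1" "0 < \<rho>" "0 < v" "v < 1"
  shows "\<exists>c1 c2. 0 < c1 \<and> 0 < c2 \<and>
    (\<forall>(M::'a measure) \<omega>. is_PPP M (intensity q \<rho>) \<omega> \<longrightarrow>
      (\<forall>(y::int \<times> int) (l::nat).
         measure M {s \<in> space M. hfun v (\<omega> s) y > enat l} \<le> c1 * exp (- c2 * real l)))"
proof -
  define t where "t = v / 2"
  define r where "r = step_mgf q t / exp (t * v)"
  define c1 where "c1 = \<rho> * (exp t / t / (1 - r)^2)"
  define c2 where "c2 = t * (1 - v)"
  have "0 < t" using assms by (simp add: t_def)
  moreover have "r < 1"
    using step_mgf_lt_exp_speed[of q v] assms by (simp add: r_def t_def divide_less_eq)
  ultimately have "0 < c1" "0 < c2" using assms by (auto simp: c1_def c2_def)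
  moreover have "measure M {s \<in> space M. hfun v (\<omega> s) y > enat l} \<le> c1 * exp (- c2 * real l)"
    if ppp: "is_PPP M (intensity q \<rho>) \<omega>" for M :: "'a measure" and \<omega> y and l :: nat
  proof -
    obtain y1 y2 where y: "y = (y1, y2)" by (cases y)
    let ?S = "Wcross v (y1, y2) \<inter> Wcross v (y1 + int l, y2 + int l)"
    have bound: "intensity q \<rho> ?S \<le> ennreal (c1 * exp (- c2 * real l))"
      using intensity_crossing_bound[of q \<rho> v y1 y2 l] assms by (simp add: t_def r_def c1_def c2_def)
    then have "intensity q \<rho> ?S < \<infinity>" by (simp add: le_less_trans)
    then have "measure M {s \<in> space M. hfun v (\<omega> s) y > enat l} \<le> enn2real (intensity q \<rho> ?S)"
      using hfun_gt_imp_charged[where v = v and y = y and l = l] unfolding y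
      by (intro PPP_hit_prob_le_intensity[OF ppp] sets.Int Wcross_sets) auto
    also have "\<dots> \<le> c1 * exp (- c2 * real l)"
      using bound \<open>0 < c1\<close> by (intro enn2real_leI) auto
    finally show ?thesis .
  qed
  ultimately show ?thesis by blast
qed

end
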